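(* Let $d\ge 3$ be an integer and let $\mathbf{u}=(u_1,\dots,u_d)$, $\rho>0$ be a smooth solution on $\mathbb{E}^d$ (Euclidean $d$-space with Cartesian coordinates $x_1,\dots,x_d$) of the ideal barotropic equations $$\partial_t \mathbf{u}+(\mathbf{u}\cdot\nabla)\mathbf{u}=-\nabla \Pi,\qquad \partial_t\rho+\nabla\cdot(\rho\mathbf{u})=0,$$ where $p=p(\rho)$ and $\nabla\Pi=\nabla p/\rho$. Assume the flow is a real Schur flow: for all times and points, $\partial_{x_k}u_j=0$ whenever $\lceil k/2\rceil>\lceil j/2\rceil$ (i.e. the velocity gradient matrix $G$ with entries $G_{kj}=\partial_{x_k}u_j$ is uniformly block upper triangular with diagonal blocks indexed by $\{1,2\},\{3,4\},\dots$). Set $M=\lfloor \frac{d+1}{2}\rfloor$ and, with the convention $u_{d+1}\equiv 0$ (and the term $u_{d+1}dx_{d+1}$ omitted) when $d$ is odd, define for $i=1,\dots,M$ the 1-forms $$U_i:=u_{2i-1}\,dx_{2i-1}+u_{2i}\,dx_{2i},\qquad \Omega_i:=dU_i .$$ Then $\Omega_1,\dots,\Omega_M$ are linearly independent, $\sum_{i=1}^M\Omega_i=\Omega:=dU$ where $U=\sum_{j=1}^d u_j\,dx_j$, and each component is Lie-invariant with respect to the flow: $(\partial_t+L_{\mathbf{u}})\Omega_i=0$ for $i=1,\dots,M$. In particular the vorticity 2-form admits a Lie-invariant decomposition into $M=\lfloor\frac{d+1}{2}\rfloor$ components.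
   Context: $L_{\mathbf{u}}$ denotes the Lie derivative along the vector field $\mathbf{u}$ (acting on differential forms, $L_{\mathbf{u}}=\iota_{\mathbf{u}}d+d\iota_{\mathbf{u}}$ with $\iota_{\mathbf{u}}$ the interior product). A Lie-invariant decomposition of the vorticity 2-form $\Omega=dU$ into $M\ge1$ components is a representation $\Omega=\sum_{i=1}^M\Omega_i$ with linearly independent 2-forms $\Omega_i$ each satisfying $(\partial_t+L_{\mathbf{u}})\Omega_i=0$. $\lfloor\cdot\rfloor$ denotes the integer part. *)

theory Defs
  imports "HOL-Analysis.Analysis"
begin

fun Ck_on :: "'a::euclidean_space set \<Rightarrow> nat \<Rightarrow> ('a \<Rightarrow> real) \<Rightarrow> bool" where
  "Ck_on S 0 f = continuous_on S f"
| "Ck_on S (Suc n) f =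
     (f differentiable_on S \<and> (\<forall>v. Ck_on S n (\<lambda>z. frechet_derivative f (at z) v)))"

definition smooth_on :: "'a::euclidean_space set \<Rightarrow> ('a \<Rightarrow> real) \<Rightarrow> bool" where
  "smooth_on S f \<longleftrightarrow> (\<forall>n. Ck_on S n f)"

text \<open>The Cartesian coordinates x_1..x_d (d = CARD('n)) are given by a
  bijection coord : {1..d} -> 'n, i.e. x_k = x $ coord k.\<close>

definition smooth_field :: "(real \<Rightarrow> real^'n \<Rightarrow> real) \<Rightarrow> bool" where
  "smooth_field f \<longleftrightarrow> smooth_on UNIV (\<lambda>(t, x). f t x)"

definition dt :: "(real \<Rightarrow> real^'n \<Rightarrow> real) \<Rightarrow> real \<Rightarrow> real^'n \<Rightarrow> real" where
  "dt f t x = frechet_derivative (\<lambda>(s, y). f s y) (at (t, x)) (1, 0)"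

definition dx :: "(nat \<Rightarrow> 'n::finite) \<Rightarrow> nat \<Rightarrow> (real \<Rightarrow> real^'n \<Rightarrow> real) \<Rightarrow> real \<Rightarrow> real^'n \<Rightarrow> real" where
  "dx coord k f t x = frechet_derivative (\<lambda>(s, y). f s y) (at (t, x)) (0, axis (coord k) 1)"

text \<open>A p-form is given by its fully antisymmetric coefficients w_{k1...kp} with respect to
  dx_1..dx_d, i.e. w = (1/p!) sum w_{k1..kp} dx_k1 ^ ... ^ dx_kp; indices range over {1..d}.\<close>

type_synonym ('n) form1 = "real \<Rightarrow> real^'n \<Rightarrow> nat \<Rightarrow> real"
type_synonym ('n) form2 = "real \<Rightarrow> real^'n \<Rightarrow> nat \<Rightarrow> nat \<Rightarrow> real"
type_synonym ('n) form3 = "real \<Rightarrow> real^'n \<Rightarrow> nat \<Rightarrow> nat \<Rightarrow> nat \<Rightarrow> real"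

definition ext_d1 :: "(nat \<Rightarrow> 'n::finite) \<Rightarrow> 'n form1 \<Rightarrow> 'n form2" where
  "ext_d1 coord a t x k j =
     dx coord k (\<lambda>s y. a s y j) t x - dx coord j (\<lambda>s y. a s y k) t x"

definition ext_d2 :: "(nat \<Rightarrow> 'n::finite) \<Rightarrow> 'n form2 \<Rightarrow> 'n form3" where
  "ext_d2 coord w t x k l m =
     dx coord k (\<lambda>s y. w s y l m) t x + dx coord l (\<lambda>s y. w s y m k) t x
     + dx coord m (\<lambda>s y. w s y k l) t x"

definition iota2 :: "nat \<Rightarrow> 'n form1 \<Rightarrow> 'n form2 \<Rightarrow> 'n form1" where
  "iota2 d v w t x m = (\<Sum>k=1..d. v t x k * w t x k m)"

definition iota3 :: "nat \<Rightarrow> 'n form1 \<Rightarrow> 'n form3 \<Rightarrow> 'n form2" where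
  "iota3 d v h t x l m = (\<Sum>k=1..d. v t x k * h t x k l m)"

text \<open>Lie derivative of a 2-form by Cartan's formula L_v = iota_v d + d iota_v\<close>
definition lie2 :: "nat \<Rightarrow> (nat \<Rightarrow> 'n::finite) \<Rightarrow> 'n form1 \<Rightarrow> 'n form2 \<Rightarrow> 'n form2" where
  "lie2 d coord v w t x k j =
     iota3 d v (ext_d2 coord w) t x k j + ext_d1 coord (iota2 d v w) t x k j"

definition vcomp :: "(nat \<Rightarrow> 'n::finite) \<Rightarrow> (real \<Rightarrow> real^'n \<Rightarrow> real^'n) \<Rightarrow> 'n form1" where
  "vcomp coord u t x j = u t x $ coord j"

definition blk :: "nat \<Rightarrow> nat" where
  "blk k = (k + 1) div 2"

text \<open>U = sum_j u_j dx_j and U_i = u_{2i-1} dx_{2i-1} + u_{2i} dx_{2i}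
  (only coordinates within 1..d occur, so u_{d+1} dx_{d+1} is absent for odd d)\<close>
definition Uform :: "(nat \<Rightarrow> 'n::finite) \<Rightarrow> (real \<Rightarrow> real^'n \<Rightarrow> real^'n) \<Rightarrow> 'n form1" where
  "Uform coord u = vcomp coord u"

definition Ublock :: "(nat \<Rightarrow> 'n::finite) \<Rightarrow> (real \<Rightarrow> real^'n \<Rightarrow> real^'n) \<Rightarrow> nat \<Rightarrow> 'n form1" where
  "Ublock coord u i t x j = (if blk j = i then vcomp coord u t x j else 0)"

end

theory Submission
  imports Defs
begin

(* Write g_kj = d_k u_j for the velocity gradient and F = -grad p(rho) / rho for the force per
   unit mass.  As p depends on rho alone, F is the gradient of the enthalpy, so d_k F_j is
   symmetric in k and j.  Differentiating the momentum equation gives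

     d_k F_j = (d_t + u . grad) g_kj + (g^2)_kj.

   If g is block upper triangular then so is g^2, hence d_k F_j = 0 whenever blk k > blk j, and
   by symmetry whenever k and j lie in different blocks.  In coordinates, (d_t + L_u) Omega_i is
   the exterior derivative of the block-i part of F, with (k, j) component
   [blk j = i] d_k F_j - [blk k = i] d_j F_k, which therefore vanishes.  Linear independence and
   the sum formula are read off componentwise: the (k, j) component of Omega_i vanishes unless
   i = max (blk k) (blk j). *)

abbreviation fderiv :: "('a::real_normed_vector \<Rightarrow> real) \<Rightarrow> 'a \<Rightarrow> 'a \<Rightarrow> real" where
  "fderiv f z \<equiv> frechet_derivative f (at z)"

lemma fderiv_eqI: "(f has_derivative f') (at z) \<Longrightarrow> fderiv f z v = f' v"
  by (metis frechet_derivative_at)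

lemma fderiv_real_scale:
  fixes g :: "real \<Rightarrow> real"
  assumes "g differentiable (at r)"
  shows "fderiv g r h = h * fderiv g r 1"
proof -
  have "linear (fderiv g r)"
    using assms by (simp add: frechet_derivative_works has_derivative_linear)
  then show ?thesis
    using linear.scaleR[of "fderiv g r" h 1] by simp
qed

lemma fderiv_compose_real:
  fixes R :: "'a::real_normed_vector \<Rightarrow> real"
  assumes R: "R differentiable (at y)" and g: "g differentiable (at (R y))"
  shows "fderiv (\<lambda>y. g (R y)) y h = fderiv R y h * fderiv g (R y) 1"
proof -
  have "((\<lambda>y. g (R y)) has_derivative (\<lambda>h. fderiv g (R y) (fderiv R y h))) (at y)"
    using diff_chain_at[OF R[unfolded frechet_derivative_works] g[unfolded frechet_derivative_works]]
    by (simp add: o_def)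
  then have "fderiv (\<lambda>y. g (R y)) y h = fderiv g (R y) (fderiv R y h)"
    by (rule fderiv_eqI)
  also have "\<dots> = fderiv R y h * fderiv g (R y) 1"
    by (rule fderiv_real_scale[OF g])
  finally show ?thesis .
qed

lemma fderiv_sum_mult:
  assumes "\<And>l. l \<in> A \<Longrightarrow> f l differentiable (at z)" and "\<And>l. l \<in> A \<Longrightarrow> g l differentiable (at z)"
  shows "fderiv (\<lambda>y. \<Sum>l\<in>A. f l y * g l y) z v
       = (\<Sum>l\<in>A. f l z * fderiv (g l) z v + fderiv (f l) z v * g l z)"
  using assms unfolding frechet_derivative_works
  by (intro fderiv_eqI has_derivative_sum has_derivative_mult)

section \<open>Symmetry of second derivatives\<close>

lemma has_real_derivative_along_line:
  fixes f :: "'a::real_normed_vector \<Rightarrow> real"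
  assumes "(f has_derivative f') (at (a + s *\<^sub>R v))"
  shows "((\<lambda>s. f (a + s *\<^sub>R v)) has_real_derivative f' v) (at s)"
proof -
  have "((\<lambda>s. a + s *\<^sub>R v) has_derivative (\<lambda>h. h *\<^sub>R v)) (at s)"
    by (intro derivative_eq_intros) auto
  from has_derivative_compose[OF this assms]
  have "((\<lambda>s. f (a + s *\<^sub>R v)) has_derivative (\<lambda>h. f' (h *\<^sub>R v))) (at s)" .
  moreover have "f' (h *\<^sub>R v) = f' v * h" for h
    using linear.scaleR[OF has_derivative_linear[OF assms]] by simp
  ultimately show ?thesis
    unfolding has_field_derivative_def by (metis (no_types, lifting) ext mult.commute)
qed

lemma second_difference_mean_value:
  fixes f :: "'a::real_normed_vector \<Rightarrow> real"
  assumes f: "\<And>y. (f has_derivative Df y) (at y)"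
    and Df: "\<And>y. ((\<lambda>y. Df y v) has_derivative Dv y) (at y)"
    and h: "h > 0"
  obtains y where "norm (y - z) \<le> h * (norm v + norm w)"
    and "f (z + h *\<^sub>R v + h *\<^sub>R w) - f (z + h *\<^sub>R v) - f (z + h *\<^sub>R w) + f z = h\<^sup>2 * Dv y w"
proof -
  define \<phi> where "\<phi> s = f ((z + h *\<^sub>R w) + s *\<^sub>R v) - f (z + s *\<^sub>R v)" for s
  have "DERIV \<phi> s :> Df ((z + h *\<^sub>R w) + s *\<^sub>R v) v - Df (z + s *\<^sub>R v) v" for s
    unfolding \<phi>_def by (intro DERIV_diff has_real_derivative_along_line f)
  from MVT2[OF h, of \<phi>, OF this] obtain \<xi> where \<xi>: "0 < \<xi>" "\<xi> < h"
    and \<phi>_diff: "\<phi> h - \<phi> 0 = h * (Df ((z + \<xi> *\<^sub>R v) + h *\<^sub>R w) v - Df (z + \<xi> *\<^sub>R v) v)"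
    by (auto simp: algebra_simps)
  define \<psi> where "\<psi> t = Df ((z + \<xi> *\<^sub>R v) + t *\<^sub>R w) v" for t
  have "DERIV \<psi> t :> Dv ((z + \<xi> *\<^sub>R v) + t *\<^sub>R w) w" for t
    unfolding \<psi>_def by (rule has_real_derivative_along_line[OF Df])
  from MVT2[OF h, of \<psi>, OF this] obtain \<eta> where \<eta>: "0 < \<eta>" "\<eta> < h"
    and \<psi>_diff: "\<psi> h - \<psi> 0 = h * Dv ((z + \<xi> *\<^sub>R v) + \<eta> *\<^sub>R w) w"
    by auto
  show ?thesis
  proof
    have "norm (\<xi> *\<^sub>R v + \<eta> *\<^sub>R w) \<le> \<xi> * norm v + \<eta> * norm w"
      using \<xi> \<eta> norm_triangle_ineq[of "\<xi> *\<^sub>R v" "\<eta> *\<^sub>R w"] by simp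
    also have "\<dots> \<le> h * (norm v + norm w)"
      using \<xi> \<eta> by (simp add: distrib_left add_mono mult_right_mono)
    finally show "norm ((z + \<xi> *\<^sub>R v) + \<eta> *\<^sub>R w - z) \<le> h * (norm v + norm w)"
      by (simp add: add.assoc)
    have "f (z + h *\<^sub>R v + h *\<^sub>R w) - f (z + h *\<^sub>R v) - f (z + h *\<^sub>R w) + f z = \<phi> h - \<phi> 0"
      unfolding \<phi>_def by (simp add: algebra_simps)
    also have "\<dots> = h * (\<psi> h - \<psi> 0)"
      unfolding \<phi>_diff \<psi>_def by simp
    finally show "f (z + h *\<^sub>R v + h *\<^sub>R w) - f (z + h *\<^sub>R v) - f (z + h *\<^sub>R w) + f z
        = h\<^sup>2 * Dv ((z + \<xi> *\<^sub>R v) + \<eta> *\<^sub>R w) w"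
      unfolding \<psi>_diff by (simp add: power2_eq_square)
  qed
qed

lemma second_derivatives_commute:
  fixes f :: "'a::real_normed_vector \<Rightarrow> real"
  assumes f: "\<And>y. (f has_derivative Df y) (at y)"
    and Dfv: "\<And>y. ((\<lambda>y. Df y v) has_derivative Dv y) (at y)"
    and Dfw: "\<And>y. ((\<lambda>y. Df y w) has_derivative Dw y) (at y)"
    and cont: "continuous (at z) (\<lambda>y. Dv y w)" "continuous (at z) (\<lambda>y. Dw y v)"
  shows "Dv z w = Dw z v"
proof -
  define r where "r n = inverse (real (Suc n)) * (norm v + norm w)" for n
  have "\<exists>y1 y2. norm (y1 - z) \<le> r n \<and> norm (y2 - z) \<le> r n \<and> Dv y1 w = Dw y2 v" for n
  proof -
    define h where "h = inverse (real (Suc n))"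
    have h: "h > 0" by (simp add: h_def)
    obtain y1 where y1: "norm (y1 - z) \<le> h * (norm v + norm w)"
      "f (z + h *\<^sub>R v + h *\<^sub>R w) - f (z + h *\<^sub>R v) - f (z + h *\<^sub>R w) + f z = h\<^sup>2 * Dv y1 w"
      using second_difference_mean_value[OF f Dfv h] .
    obtain y2 where y2: "norm (y2 - z) \<le> h * (norm w + norm v)"
      "f (z + h *\<^sub>R w + h *\<^sub>R v) - f (z + h *\<^sub>R w) - f (z + h *\<^sub>R v) + f z = h\<^sup>2 * Dw y2 v"
      using second_difference_mean_value[OF f Dfw h] .
    have "Dv y1 w = Dw y2 v"
      using y1(2) y2(2) h by (simp add: algebra_simps)
    moreover have "norm (y2 - z) \<le> h * (norm v + norm w)"
      using y2(1) by (simp add: add.commute)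
    ultimately show ?thesis
      using y1(1) unfolding r_def h_def by blast
  qed
  then obtain y1 y2 where y: "\<And>n. norm (y1 n - z) \<le> r n" "\<And>n. norm (y2 n - z) \<le> r n"
    and eq: "\<And>n. Dv (y1 n) w = Dw (y2 n) v"
    by metis
  have "r \<longlonglongrightarrow> 0"
    unfolding r_def by (intro tendsto_mult_left_zero LIMSEQ_inverse_real_of_nat)
  then have "(\<lambda>n. y1 n - z) \<longlonglongrightarrow> 0" "(\<lambda>n. y2 n - z) \<longlonglongrightarrow> 0"
    using y by (auto intro: Lim_null_comparison[OF always_eventually])
  then have "y1 \<longlonglongrightarrow> z" "y2 \<longlonglongrightarrow> z"
    by (auto intro: LIM_zero_cancel)
  then have "(\<lambda>n. Dv (y1 n) w) \<longlonglongrightarrow> Dv z w" "(\<lambda>n. Dw (y2 n) v) \<longlonglongrightarrow> Dw z v"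
    using continuous_imp_tendsto[OF cont(1)] continuous_imp_tendsto[OF cont(2)] by (auto simp: o_def)
  then show ?thesis
    unfolding eq by (rule LIMSEQ_unique)
qed

lemma smooth_on_UNIV_has_derivative:
  assumes "smooth_on UNIV f"
  shows "(f has_derivative fderiv f z) (at z)"
proof -
  have "Ck_on UNIV (Suc 0) f"
    using assms unfolding smooth_on_def by blast
  then show ?thesis
    by (simp add: differentiable_on_def frechet_derivative_works[symmetric])
qed

lemma smooth_on_UNIV_continuous:
  assumes "smooth_on UNIV f"
  shows "continuous (at z) f"
proof -
  have "Ck_on UNIV 0 f"
    using assms unfolding smooth_on_def by blast
  then show ?thesis
    by (simp add: continuous_on_eq_continuous_at)
qed

lemma smooth_on_fderiv: "smooth_on S f \<Longrightarrow> smooth_on S (\<lambda>z. fderiv f z v)"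
  unfolding smooth_on_def by (metis Ck_on.simps(2))

lemma smooth_fderiv_commute:
  "smooth_on UNIV f \<Longrightarrow> fderiv (\<lambda>y. fderiv f y v) z w = fderiv (\<lambda>y. fderiv f y w) z v"
  by (rule second_derivatives_commute[where Df = "fderiv f"])
    (auto intro: smooth_on_UNIV_has_derivative smooth_on_fderiv smooth_on_UNIV_continuous)

text \<open>With \<open>q(r) = p'(r) / r\<close> the force is \<open>-q(\<rho>) \<nabla>\<rho>\<close>, minus the gradient of the
  enthalpy \<open>\<integral> q\<close>.\<close>
lemma barotropic_force_derivative_symmetric:
  fixes R :: "'a::euclidean_space \<Rightarrow> real" and p :: "real \<Rightarrow> real"
  assumes R: "smooth_on UNIV R" and R_pos: "\<And>y. R y > 0" and p: "smooth_on {0<..} p"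
  shows "fderiv (\<lambda>y. - fderiv (\<lambda>y. p (R y)) y v / R y) z w
       = fderiv (\<lambda>y. - fderiv (\<lambda>y. p (R y)) y w / R y) z v"
proof -
  have p2: "Ck_on {0<..} (Suc (Suc 0)) p"
    using p unfolding smooth_on_def by blast
  define q where "q r = fderiv p r 1 / r" for r
  have p_diff: "p differentiable (at r)" if "r > 0" for r
    using p2 that by (simp add: differentiable_on_eq_differentiable_at)
  have q_diff: "q differentiable (at r)" if "r > 0" for r
  proof -
    have "(\<lambda>r. fderiv p r 1) differentiable (at r)"
      using p2 that by (simp add: differentiable_on_eq_differentiable_at)
    then show ?thesis
      unfolding q_def[abs_def] using that by (intro differentiable_divide differentiable_ident) auto
  qed
  have R_diff: "R differentiable (at y)" for y
    using smooth_on_UNIV_has_derivative[OF R] by (rule differentiableI)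
  have force: "(\<lambda>y. - fderiv (\<lambda>y. p (R y)) y a / R y) = (\<lambda>y. - (fderiv R y a * q (R y)))" for a
    using fderiv_compose_real[OF R_diff p_diff[OF R_pos]] by (simp add: q_def)
  have "fderiv (\<lambda>y. - fderiv (\<lambda>y. p (R y)) y a / R y) z b
      = - (fderiv (\<lambda>y. fderiv R y a) z b * q (R z)
           + fderiv R z a * fderiv R z b * fderiv q (R z) 1)" for a b
  proof -
    have "((\<lambda>y. fderiv R y a) has_derivative fderiv (\<lambda>y. fderiv R y a) z) (at z)"
      by (rule smooth_on_UNIV_has_derivative[OF smooth_on_fderiv[OF R]])
    moreover have "((\<lambda>y. q (R y)) has_derivative fderiv (\<lambda>y. q (R y)) z) (at z)"
      using differentiable_chain_at[OF R_diff q_diff[OF R_pos], unfolded o_def]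
      by (simp add: frechet_derivative_works)
    ultimately have "fderiv (\<lambda>y. - (fderiv R y a * q (R y))) z b
        = - (fderiv R z a * fderiv (\<lambda>y. q (R y)) z b + fderiv (\<lambda>y. fderiv R y a) z b * q (R z))"
      by (rule fderiv_eqI[OF has_derivative_minus[OF has_derivative_mult]])
    then show ?thesis
      unfolding force fderiv_compose_real[OF R_diff q_diff[OF R_pos]] by (simp add: algebra_simps)
  qed
  then show ?thesis
    using smooth_fderiv_commute[OF R, of v z w] by (simp add: mult.commute)
qed

section \<open>Flows with block upper triangular velocity gradient\<close>

text \<open>\<open>(\<partial>\<^sub>t + L\<^sub>V) W\<close> in coordinates, by Cartan's formula: \<open>e 0\<close> is the time direction and
  \<open>e 1, \<dots>, e d\<close> are the spatial ones.\<close>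
definition material_lie2 ::
    "nat \<Rightarrow> (nat \<Rightarrow> 'a::real_normed_vector) \<Rightarrow> (nat \<Rightarrow> 'a \<Rightarrow> real) \<Rightarrow> (nat \<Rightarrow> nat \<Rightarrow> 'a \<Rightarrow> real)
      \<Rightarrow> nat \<Rightarrow> nat \<Rightarrow> 'a \<Rightarrow> real" where
  "material_lie2 d e V W k j y =
     fderiv (W k j) y (e 0)
     + (\<Sum>l=1..d. V l y * (fderiv (W k j) y (e l) + fderiv (W j l) y (e k) + fderiv (W l k) y (e j)))
     + (fderiv (\<lambda>y. \<Sum>l=1..d. V l y * W l j y) y (e k)
        - fderiv (\<lambda>y. \<Sum>l=1..d. V l y * W l k y) y (e j))"

locale block_triangular_flow =
  fixes d :: nat and e :: "nat \<Rightarrow> 'a::euclidean_space" and U F :: "nat \<Rightarrow> 'a \<Rightarrow> real"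
  assumes smooth_velocity: "smooth_on UNIV (U l)"
    and momentum: "j \<in> {1..d} \<Longrightarrow> fderiv (U j) y (e 0) + (\<Sum>l=1..d. U l y * fderiv (U j) y (e l)) = F j y"
    and force_derivative_symmetric:
      "k \<in> {1..d} \<Longrightarrow> j \<in> {1..d} \<Longrightarrow> fderiv (F j) y (e k) = fderiv (F k) y (e j)"
    and velocity_gradient_block_triangular:
      "k \<in> {1..d} \<Longrightarrow> j \<in> {1..d} \<Longrightarrow> blk j < blk k \<Longrightarrow> fderiv (U j) y (e k) = 0"
begin

definition grad :: "nat \<Rightarrow> nat \<Rightarrow> 'a \<Rightarrow> real" where
  "grad a b y = fderiv (U b) y (e a)"

definition vorticity :: "nat \<Rightarrow> nat \<Rightarrow> nat \<Rightarrow> 'a \<Rightarrow> real" where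
  "vorticity i a b y = of_bool (blk b = i) * grad a b y - of_bool (blk a = i) * grad b a y"

lemma velocity_has_derivative: "(U l has_derivative fderiv (U l) y) (at y)"
  by (rule smooth_on_UNIV_has_derivative[OF smooth_velocity])

lemma grad_has_derivative: "(grad a b has_derivative fderiv (grad a b) y) (at y)"
  unfolding grad_def[abs_def]
  by (intro smooth_on_UNIV_has_derivative smooth_on_fderiv smooth_velocity)

lemma force_gradient:
  assumes b: "b \<in> {1..d}"
  shows "fderiv (F b) y (e a)
       = fderiv (grad a b) y (e 0) + (\<Sum>l=1..d. U l y * fderiv (grad a b) y (e l) + grad a l y * grad l b y)"
proof -
  have "F b = (\<lambda>y. grad 0 b y + (\<Sum>l=1..d. U l y * grad l b y))"
    using momentum[OF b] by (auto simp: grad_def)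
  then have "fderiv (F b) y (e a)
      = fderiv (grad 0 b) y (e a)
        + (\<Sum>l=1..d. U l y * fderiv (grad l b) y (e a) + fderiv (U l) y (e a) * grad l b y)"
    by (simp, intro fderiv_eqI has_derivative_add has_derivative_sum has_derivative_mult
        grad_has_derivative velocity_has_derivative)
  moreover have swap: "fderiv (grad c b) y (e a) = fderiv (grad a b) y (e c)" for c
    unfolding grad_def by (rule smooth_fderiv_commute[OF smooth_velocity])
  ultimately show ?thesis
    by (simp add: swap grad_def)
qed

lemma force_gradient_eq_0:
  assumes a: "a \<in> {1..d}" and b: "b \<in> {1..d}" and ba: "blk b < blk a"
  shows "fderiv (F b) y (e a) = 0"
proof -
  have "grad a b = (\<lambda>y. 0)"
    using velocity_gradient_block_triangular[OF a b ba] by (auto simp: grad_def)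
  moreover have "(\<Sum>l=1..d. grad a l y * grad l b y) = 0"
  proof (intro sum.neutral ballI)
    fix l assume l: "l \<in> {1..d}"
    show "grad a l y * grad l b y = 0"
      using velocity_gradient_block_triangular[OF a l] velocity_gradient_block_triangular[OF l b] ba
      by (cases "blk l < blk a") (auto simp: grad_def)
  qed
  ultimately show ?thesis
    using force_gradient[OF b, of y a] by simp
qed

lemma block_force_curl_eq_0:
  assumes k: "k \<in> {1..d}" and j: "j \<in> {1..d}"
  shows "of_bool (blk j = i) * fderiv (F j) y (e k) - of_bool (blk k = i) * fderiv (F k) y (e j) = 0"
proof (cases "blk k = blk j")
  case True
  then show ?thesis
    using force_derivative_symmetric[OF k j] by simp
next
  case False
  then have "fderiv (F j) y (e k) = 0"
    using force_gradient_eq_0[OF k j] force_gradient_eq_0[OF j k] force_derivative_symmetric[OF k j]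
    by (cases "blk k < blk j") auto
  then show ?thesis
    using force_derivative_symmetric[OF k j] by simp
qed

lemma vorticity_has_derivative:
  "(vorticity i a b has_derivative
     (\<lambda>v. of_bool (blk b = i) * fderiv (grad a b) y v - of_bool (blk a = i) * fderiv (grad b a) y v)) (at y)"
  unfolding vorticity_def[abs_def]
  by (intro has_derivative_diff has_derivative_mult_right grad_has_derivative)

lemma fderiv_vorticity:
  "fderiv (vorticity i a b) y v
     = of_bool (blk b = i) * fderiv (grad a b) y v - of_bool (blk a = i) * fderiv (grad b a) y v"
  by (rule fderiv_eqI[OF vorticity_has_derivative])

lemma material_lie2_vorticity:
  assumes k: "k \<in> {1..d}" and j: "j \<in> {1..d}"
  shows "material_lie2 d e U (vorticity i) k j y
       = of_bool (blk j = i) * fderiv (F j) y (e k) - of_bool (blk k = i) * fderiv (F k) y (e j)"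
proof -
  define \<alpha> \<beta> where "\<alpha> = (of_bool (blk j = i) :: real)" and "\<beta> = (of_bool (blk k = i) :: real)"
  define \<kappa> where "\<kappa> l = (of_bool (blk l = i) :: real)" for l
  define S where "S a b c = fderiv (grad a b) y (e c)" for a b c
  define g where "g a b = grad a b y" for a b
  have interior: "fderiv (\<lambda>y. \<Sum>l=1..d. U l y * vorticity i l b y) y (e a)
      = (\<Sum>l=1..d. U l y * (\<kappa> b * S l b a - \<kappa> l * S b l a) + g a l * (\<kappa> b * g l b - \<kappa> l * g b l))" for a b
  proof -
    have "fderiv (\<lambda>y. \<Sum>l=1..d. U l y * vorticity i l b y) y (e a)
        = (\<Sum>l=1..d. U l y * fderiv (vorticity i l b) y (e a) + fderiv (U l) y (e a) * vorticity i l b y)"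
      by (rule fderiv_sum_mult) (auto intro: differentiableI velocity_has_derivative vorticity_has_derivative)
    then show ?thesis
      by (simp add: fderiv_vorticity vorticity_def \<kappa>_def S_def g_def grad_def)
  qed
  define X where "X l =
      U l y * ((\<alpha> * S k j l - \<beta> * S j k l) + (\<kappa> l * S j l k - \<alpha> * S l j k) + (\<beta> * S l k j - \<kappa> l * S k l j))
      + ((U l y * (\<alpha> * S l j k - \<kappa> l * S j l k) + g k l * (\<alpha> * g l j - \<kappa> l * g j l))
         - (U l y * (\<beta> * S l k j - \<kappa> l * S k l j) + g j l * (\<beta> * g l k - \<kappa> l * g k l)))" for l
  have "material_lie2 d e U (vorticity i) k j y = (\<alpha> * S k j 0 - \<beta> * S j k 0) + (\<Sum>l=1..d. X l)"
    unfolding material_lie2_def interior X_def sum.distrib sum_subtractf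
    by (simp add: fderiv_vorticity \<alpha>_def \<beta>_def \<kappa>_def S_def add.assoc)
  also have "(\<Sum>l=1..d. X l)
      = \<alpha> * (\<Sum>l=1..d. U l y * S k j l + g k l * g l j) - \<beta> * (\<Sum>l=1..d. U l y * S j k l + g j l * g l k)"
    unfolding sum_distrib_left sum_subtractf[symmetric] X_def
    by (intro sum.cong refl) (simp add: algebra_simps)
  also have "(\<alpha> * S k j 0 - \<beta> * S j k 0)
      + (\<alpha> * (\<Sum>l=1..d. U l y * S k j l + g k l * g l j) - \<beta> * (\<Sum>l=1..d. U l y * S j k l + g j l * g l k))
      = \<alpha> * fderiv (F j) y (e k) - \<beta> * fderiv (F k) y (e j)"
    unfolding force_gradient[OF j] force_gradient[OF k] S_def g_def by (simp add: algebra_simps)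
  finally show ?thesis
    unfolding \<alpha>_def \<beta>_def .
qed

lemma material_lie2_vorticity_eq_0:
  "k \<in> {1..d} \<Longrightarrow> j \<in> {1..d} \<Longrightarrow> material_lie2 d e U (vorticity i) k j y = 0"
  by (simp add: material_lie2_vorticity block_force_curl_eq_0)

end

section \<open>Coordinates on space-time\<close>

lemma ext_d1_Ublock:
  "ext_d1 coord (Ublock coord u i) t x k j
   = of_bool (blk j = i) * dx coord k (\<lambda>s y. vcomp coord u s y j) t x
     - of_bool (blk k = i) * dx coord j (\<lambda>s y. vcomp coord u s y k) t x"
proof -
  have "dx coord a (\<lambda>s y. Ublock coord u i s y b) t x
      = of_bool (blk b = i) * dx coord a (\<lambda>s y. vcomp coord u s y b) t x" for a b
    by (cases "blk b = i") (simp_all add: Ublock_def dx_def split_def)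
  then show ?thesis
    by (simp add: ext_d1_def)
qed

lemma blk_mem_blocks: "j \<in> {1..d} \<Longrightarrow> blk j \<in> {1..(d + 1) div 2}"
  by (auto simp: blk_def intro: div_le_mono)

lemma sum_ext_d1_Ublock:
  assumes "k \<in> {1..d}" and "j \<in> {1..d}"
  shows "(\<Sum>i=1..(d + 1) div 2. ext_d1 coord (Ublock coord u i) t x k j) = ext_d1 coord (Uform coord u) t x k j"
proof -
  have one: "(\<Sum>i=1..(d + 1) div 2. of_bool (blk b = i) * c) = c" if "b \<in> {1..d}" for b and c :: real
  proof -
    have "(\<Sum>i=1..(d + 1) div 2. of_bool (blk b = i) * c) = (\<Sum>i=1..(d + 1) div 2. if blk b = i then c else 0)"
      by (intro sum.cong) auto
    then show ?thesis
      using blk_mem_blocks[OF that] by simp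
  qed
  show ?thesis
    unfolding ext_d1_Ublock sum_subtractf one[OF assms(2)] one[OF assms(1)]
    by (simp add: ext_d1_def Uform_def)
qed

lemma ext_d1_Ublock_eq_0:
  assumes schur: "\<And>a b. a \<in> {1..d} \<Longrightarrow> b \<in> {1..d} \<Longrightarrow> blk b < blk a
      \<Longrightarrow> dx coord a (\<lambda>s y. vcomp coord u s y b) t x = 0"
    and k: "k \<in> {1..d}" and j: "j \<in> {1..d}" and i: "i \<noteq> max (blk k) (blk j)"
  shows "ext_d1 coord (Ublock coord u i) t x k j = 0"
  using schur[OF k j] schur[OF j k] i unfolding ext_d1_Ublock by (auto simp: max_def split: if_split_asm)

lemma sum_ext_d1_Ublock_eq_0D:
  assumes schur: "\<And>a b. a \<in> {1..d} \<Longrightarrow> b \<in> {1..d} \<Longrightarrow> blk b < blk a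
      \<Longrightarrow> dx coord a (\<lambda>s y. vcomp coord u s y b) t x = 0"
    and k: "k \<in> {1..d}" and j: "j \<in> {1..d}"
    and sum: "(\<Sum>i=1..(d + 1) div 2. c i * ext_d1 coord (Ublock coord u i) t x k j) = 0"
  shows "c i * ext_d1 coord (Ublock coord u i) t x k j = 0"
proof -
  define m where "m = max (blk k) (blk j)"
  have m: "m \<in> {1..(d + 1) div 2}"
    using blk_mem_blocks[OF k] blk_mem_blocks[OF j] by (simp add: m_def max_def)
  have other: "ext_d1 coord (Ublock coord u i') t x k j = 0" if "i' \<noteq> m" for i'
    using ext_d1_Ublock_eq_0[OF schur k j] that by (simp add: m_def)
  have "(\<Sum>i=1..(d + 1) div 2. c i * ext_d1 coord (Ublock coord u i) t x k j)
      = c m * ext_d1 coord (Ublock coord u m) t x k j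
        + (\<Sum>i\<in>{1..(d + 1) div 2} - {m}. c i * ext_d1 coord (Ublock coord u i) t x k j)"
    using m by (simp add: sum.remove)
  also have "(\<Sum>i\<in>{1..(d + 1) div 2} - {m}. c i * ext_d1 coord (Ublock coord u i) t x k j) = 0"
    using other by (intro sum.neutral) auto
  finally show ?thesis
    using sum other by (cases "i = m") auto
qed

definition txdir :: "(nat \<Rightarrow> 'n) \<Rightarrow> nat \<Rightarrow> real \<times> (real^'n)" where
  "txdir coord a = (if a = 0 then (1, 0) else (0, axis (coord a) 1))"

lemma dt_eq_fderiv: "dt f t x = fderiv (case_prod f) (t, x) (txdir coord 0)"
  by (simp add: dt_def txdir_def)

lemma dx_eq_fderiv: "a \<noteq> 0 \<Longrightarrow> dx coord a f t x = fderiv (case_prod f) (t, x) (txdir coord a)"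
  by (simp add: dx_def txdir_def)

lemma dt_add_lie2_eq_material_lie2:
  fixes w :: "'n::finite form2" and v :: "'n form1"
  assumes W: "\<And>a b. a \<in> {1..d} \<Longrightarrow> b \<in> {1..d} \<Longrightarrow> case_prod (\<lambda>s y. w s y a b) = W a b"
    and V: "\<And>l. l \<in> {1..d} \<Longrightarrow> case_prod (\<lambda>s y. v s y l) = V l"
    and k: "k \<in> {1..d}" and j: "j \<in> {1..d}"
  shows "dt (\<lambda>s y. w s y k j) t x + lie2 d coord v w t x k j
       = material_lie2 d (txdir coord) V W k j (t, x)"
proof -
  have dx_W: "dx coord c (\<lambda>s y. w s y a b) t x = fderiv (W a b) (t, x) (txdir coord c)"
    if "c \<in> {1..d}" "a \<in> {1..d}" "b \<in> {1..d}" for a b c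
    using that by (simp add: dx_eq_fderiv W)
  have "case_prod (\<lambda>s y. \<Sum>l=1..d. v s y l * w s y l b) = (\<lambda>z. \<Sum>l=1..d. V l z * W l b z)"
    if "b \<in> {1..d}" for b
    using that by (auto simp: fun_eq_iff V[symmetric] W[symmetric])
  then have dx_iota: "dx coord c (\<lambda>s y. \<Sum>l=1..d. v s y l * w s y l b) t x
      = fderiv (\<lambda>z. \<Sum>l=1..d. V l z * W l b z) (t, x) (txdir coord c)"
    if "c \<in> {1..d}" "b \<in> {1..d}" for b c
    using that by (simp add: dx_eq_fderiv)
  have "v t x l = V l (t, x)" if "l \<in> {1..d}" for l
    using that by (simp add: V[symmetric])
  with k j show ?thesis
    unfolding lie2_def iota3_def ext_d2_def ext_d1_def iota2_def material_lie2_def dx_iota[OF k j] dx_iota[OF j k]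
    by (simp add: dt_eq_fderiv[of _ _ _ coord] W dx_W)
qed

lemma block_triangular_flow_txdir:
  fixes u :: "real \<Rightarrow> real^'n \<Rightarrow> real^'n" and rho :: "real \<Rightarrow> real^'n \<Rightarrow> real"
    and coord :: "nat \<Rightarrow> 'n"
  assumes u_smooth: "\<forall>j. smooth_field (\<lambda>t x. u t x $ j)"
    and rho_smooth: "smooth_field rho" and rho_pos: "\<forall>t x. rho t x > 0"
    and p_smooth: "smooth_on {0<..} p"
    and momentum: "\<forall>t x. \<forall>j\<in>{1..d}.
        dt (\<lambda>s y. vcomp coord u s y j) t x
        + (\<Sum>k=1..d. vcomp coord u t x k * dx coord k (\<lambda>s y. vcomp coord u s y j) t x)
        = - dx coord j (\<lambda>s y. p (rho s y)) t x / rho t x"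
    and schur: "\<forall>t x. \<forall>k\<in>{1..d}. \<forall>j\<in>{1..d}.
        blk k > blk j \<longrightarrow> dx coord k (\<lambda>s y. vcomp coord u s y j) t x = 0"
  shows "block_triangular_flow d (txdir coord) (\<lambda>l. case_prod (\<lambda>s y. vcomp coord u s y l))
           (\<lambda>j. case_prod (\<lambda>s y. - dx coord j (\<lambda>s y. p (rho s y)) s y / rho s y))"
proof
  fix l
  show "smooth_on UNIV (case_prod (\<lambda>s y. vcomp coord u s y l))"
    using u_smooth by (simp add: smooth_field_def vcomp_def)
next
  fix j and z :: "real \<times> (real^'n)"
  assume j: "j \<in> {1..d}"
  obtain t x where z: "z = (t, x)"
    by fastforce
  show "fderiv (case_prod (\<lambda>s y. vcomp coord u s y j)) z (txdir coord 0)
      + (\<Sum>l=1..d. case_prod (\<lambda>s y. vcomp coord u s y l) z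
           * fderiv (case_prod (\<lambda>s y. vcomp coord u s y j)) z (txdir coord l))
      = case_prod (\<lambda>s y. - dx coord j (\<lambda>s y. p (rho s y)) s y / rho s y) z"
    using momentum j unfolding z by (simp add: dt_eq_fderiv[of _ _ _ coord] dx_eq_fderiv)
next
  fix k j and z :: "real \<times> (real^'n)"
  assume k: "k \<in> {1..d}" and j: "j \<in> {1..d}"
  define R where "R = case_prod rho"
  have force: "case_prod (\<lambda>s y. - dx coord a (\<lambda>s y. p (rho s y)) s y / rho s y)
      = (\<lambda>z. - fderiv (\<lambda>z. p (R z)) z (txdir coord a) / R z)" if "a \<in> {1..d}" for a
    using that by (auto simp: fun_eq_iff dx_eq_fderiv R_def split_def)
  have R: "smooth_on UNIV R"
    using rho_smooth by (simp add: R_def smooth_field_def)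
  have R_pos: "R z > 0" for z
    using rho_pos by (simp add: R_def case_prod_beta)
  show "fderiv (case_prod (\<lambda>s y. - dx coord j (\<lambda>s y. p (rho s y)) s y / rho s y)) z (txdir coord k)
      = fderiv (case_prod (\<lambda>s y. - dx coord k (\<lambda>s y. p (rho s y)) s y / rho s y)) z (txdir coord j)"
    unfolding force[OF j] force[OF k] by (rule barotropic_force_derivative_symmetric[OF R R_pos p_smooth])
next
  fix k j and z :: "real \<times> (real^'n)"
  assume "k \<in> {1..d}" "j \<in> {1..d}" "blk j < blk k"
  then show "fderiv (case_prod (\<lambda>s y. vcomp coord u s y j)) z (txdir coord k) = 0"
    using schur by (cases z) (simp add: dx_eq_fderiv)
qed

lemma Ublock_lie_invariant:
  fixes u :: "real \<Rightarrow> real^'n \<Rightarrow> real^'n" and rho :: "real \<Rightarrow> real^'n \<Rightarrow> real"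
    and coord :: "nat \<Rightarrow> 'n"
  assumes u_smooth: "\<forall>j. smooth_field (\<lambda>t x. u t x $ j)"
    and rho_smooth: "smooth_field rho" and rho_pos: "\<forall>t x. rho t x > 0"
    and p_smooth: "smooth_on {0<..} p"
    and momentum: "\<forall>t x. \<forall>j\<in>{1..d}.
        dt (\<lambda>s y. vcomp coord u s y j) t x
        + (\<Sum>k=1..d. vcomp coord u t x k * dx coord k (\<lambda>s y. vcomp coord u s y j) t x)
        = - dx coord j (\<lambda>s y. p (rho s y)) t x / rho t x"
    and schur: "\<forall>t x. \<forall>k\<in>{1..d}. \<forall>j\<in>{1..d}.
        blk k > blk j \<longrightarrow> dx coord k (\<lambda>s y. vcomp coord u s y j) t x = 0"
    and k: "k \<in> {1..d}" and j: "j \<in> {1..d}"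
  shows "dt (\<lambda>s y. ext_d1 coord (Ublock coord u i) s y k j) t x
       + lie2 d coord (vcomp coord u) (ext_d1 coord (Ublock coord u i)) t x k j = 0"
proof -
  interpret block_triangular_flow d "txdir coord" "\<lambda>l. case_prod (\<lambda>s y. vcomp coord u s y l)"
      "\<lambda>j. case_prod (\<lambda>s y. - dx coord j (\<lambda>s y. p (rho s y)) s y / rho s y)"
    using u_smooth rho_smooth rho_pos p_smooth momentum schur by (rule block_triangular_flow_txdir)
  have "case_prod (\<lambda>s y. ext_d1 coord (Ublock coord u i) s y a b) = vorticity i a b"
    if "a \<in> {1..d}" "b \<in> {1..d}" for a b
    using that by (auto simp: fun_eq_iff ext_d1_Ublock vorticity_def grad_def dx_eq_fderiv)
  then have "dt (\<lambda>s y. ext_d1 coord (Ublock coord u i) s y k j) t x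
       + lie2 d coord (vcomp coord u) (ext_d1 coord (Ublock coord u i)) t x k j
      = material_lie2 d (txdir coord) (\<lambda>l. case_prod (\<lambda>s y. vcomp coord u s y l)) (vorticity i) k j (t, x)"
    by (rule dt_add_lie2_eq_material_lie2[OF _ refl k j])
  with material_lie2_vorticity_eq_0[OF k j] show ?thesis
    by simp
qed

theorem theorem1:
  fixes u :: "real \<Rightarrow> real^'n \<Rightarrow> real^'n"
    and rho :: "real \<Rightarrow> real^'n \<Rightarrow> real"
    and p :: "real \<Rightarrow> real"
    and coord :: "nat \<Rightarrow> 'n"
    and d M :: nat
  assumes d_def: "d = CARD('n)"
    and d_ge: "d \<ge> 3"
    and coord: "bij_betw coord {1..d} UNIV"
    and u_smooth: "\<forall>j. smooth_field (\<lambda>t x. u t x $ j)"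
    and rho_smooth: "smooth_field rho"
    and rho_pos: "\<forall>t x. rho t x > 0"
    and p_smooth: "smooth_on {0<..} p"
    and momentum: "\<forall>t x. \<forall>j\<in>{1..d}.
        dt (\<lambda>s y. vcomp coord u s y j) t x
        + (\<Sum>k=1..d. vcomp coord u t x k * dx coord k (\<lambda>s y. vcomp coord u s y j) t x)
        = - dx coord j (\<lambda>s y. p (rho s y)) t x / rho t x"
    and continuity: "\<forall>t x.
        dt rho t x + (\<Sum>k=1..d. dx coord k (\<lambda>s y. rho s y * vcomp coord u s y k) t x) = 0"
    and schur: "\<forall>t x. \<forall>k\<in>{1..d}. \<forall>j\<in>{1..d}.
        blk k > blk j \<longrightarrow> dx coord k (\<lambda>s y. vcomp coord u s y j) t x = 0"
    and M_def: "M = nat \<lfloor>(real d + 1) / 2\<rfloor>"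
  shows
    "(\<forall>c :: nat \<Rightarrow> real.
        (\<forall>t x. \<forall>k\<in>{1..d}. \<forall>j\<in>{1..d}.
           (\<Sum>i=1..M. c i * ext_d1 coord (Ublock coord u i) t x k j) = 0)
        \<longrightarrow> (\<forall>i\<in>{1..M}. \<forall>t x. \<forall>k\<in>{1..d}. \<forall>j\<in>{1..d}.
               c i * ext_d1 coord (Ublock coord u i) t x k j = 0))
     \<and> (\<forall>t x. \<forall>k\<in>{1..d}. \<forall>j\<in>{1..d}.
          (\<Sum>i=1..M. ext_d1 coord (Ublock coord u i) t x k j)
          = ext_d1 coord (Uform coord u) t x k j)
     \<and> (\<forall>i\<in>{1..M}. \<forall>t x. \<forall>k\<in>{1..d}. \<forall>j\<in>{1..d}.
          dt (\<lambda>s y. ext_d1 coord (Ublock coord u i) s y k j) t x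
          + lie2 d coord (vcomp coord u) (ext_d1 coord (Ublock coord u i)) t x k j = 0)"
proof -
  have "\<lfloor>(real d + 1) / 2\<rfloor> = int ((d + 1) div 2)"
    using floor_divide_of_nat_eq[of "d + 1" 2, where 'a = real] by (simp add: add.commute)
  then have M: "M = (d + 1) div 2"
    using M_def by simp
  have schur_at: "\<And>t x a b. a \<in> {1..d} \<Longrightarrow> b \<in> {1..d} \<Longrightarrow> blk b < blk a
      \<Longrightarrow> dx coord a (\<lambda>s y. vcomp coord u s y b) t x = 0"
    using schur by blast
  show ?thesis
    unfolding M
    using sum_ext_d1_Ublock_eq_0D[OF schur_at] sum_ext_d1_Ublock
      Ublock_lie_invariant[OF u_smooth rho_smooth rho_pos p_smooth momentum schur]
    by blast
qed

end
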